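(* Let $p,q$ be positive integers, let $e\in\mathbb{R}^p$ be the vector of all ones, and let $$L:=\{(x,u)\in\mathbb{R}^p\times\mathbb{R}^q:x\ge\|u\|e\},\qquad M:=\{(x,u)\in\mathbb{R}^p\times\mathbb{R}^q:\langle x,e\rangle\ge\|u\|,\ x\ge0\}.$$ Let $(z,w)\in\mathbb{R}^p\times\mathbb{R}^q$. Then: 1. If $z^+\ge\|w\|e$, then $P_L(z,w)=(z^+,w)$ and $P_M(-z,-w)=(z^-,0)$. 2. If $\langle z^-,e\rangle\ge\|w\|$, then $P_L(z,w)=(z^+,0)$ and $P_M(-z,-w)=(z^-,-w)$. 3. If $z^+\not\ge\|w\|e$ and $\langle z^-,e\rangle<\|w\|$, then the piecewise linear equation $$\lambda\|w\|=\left\langle e,[(\lambda+1)z-\|w\|e]^-\right\rangle$$ has a unique positive solution $\lambda>0$, and for this $\lambda$, $$P_L(z,w)=\left(\Big[z-\tfrac{1}{\lambda+1}\|w\|e\Big]^++\tfrac{1}{\lambda+1}\|w\|e,\ \tfrac{1}{\lambda+1}w\right),\qquad P_M(-z,-w)=\left(\Big[z-\tfrac{1}{\lambda+1}\|w\|e\Big]^-,\ -\tfrac{\lambda}{\lambda+1}w\right).$$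
   Context: For a closed convex set $C$, $P_C(x):=\operatorname{argmin}\{\|x-y\|:y\in C\}$ is the metric (orthogonal) projection onto $C$, with respect to the Euclidean norm on $\mathbb{R}^p\times\mathbb{R}^q\cong\mathbb{R}^{p+q}$ (inner product $\langle(x,u),(y,v)\rangle=\langle x,y\rangle+\langle u,v\rangle$). The order $\ge$ on vectors is componentwise; $z^+\not\ge\|w\|e$ means that $z^+\ge\|w\|e$ fails. For $\alpha\in\mathbb{R}$, $\alpha^+:=\max(\alpha,0)$, $\alpha^-:=\max(-\alpha,0)$, applied componentwise to vectors. $L$ and $M$ are mutually dual proper cones (the extended second order cones). *)

theory Defs
  imports "HOL-Analysis.Analysis"
begin

definition ones :: "real^'p" where
  "ones = (\<chi> i. 1)"

definition vpos :: "real^'p \<Rightarrow> real^'p" where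
  "vpos v = (\<chi> i. max (v $ i) 0)"

definition vneg :: "real^'p \<Rightarrow> real^'p" where
  "vneg v = (\<chi> i. max (- (v $ i)) 0)"

definition coneL :: "((real^'p) \<times> (real^'q)) set" where
  "coneL = {(x, u). x \<ge> norm u *\<^sub>R ones}"

definition coneM :: "((real^'p) \<times> (real^'q)) set" where
  "coneM = {(x, u). x \<bullet> ones \<ge> norm u \<and> x \<ge> 0}"

end

theory Submission
  imports Defs
begin

text \<open>
  Every element of L pairs nonnegatively with every element of M, so a splitting
  (z, w) = a - b with a \<in> L, b \<in> M and a \<bottom> b yields both projections at once
  (Moreau decomposition). In the first two cases the splitting is read off from the positive
  and negative parts of z. In the third case, writing t = 1/(\<lambda> + 1) and
  v = z - t \<parallel>w\<parallel> e, the pair a = (v^+ + t \<parallel>w\<parallel> e, t w), b = (v^-, -(1 - t) w) is such a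
  splitting exactly when \<langle>e, v^-\<rangle> = (1 - t) \<parallel>w\<parallel>, which is the piecewise linear equation.
  Its left side plus t \<parallel>w\<parallel> is strictly increasing in t, lies below \<parallel>w\<parallel> at t = 0 and above it
  at t = 1, so exactly one t \<in> (0, 1) works.
\<close>

lemma ones_nth [simp]: "ones $ i = 1"
  by (simp add: ones_def)

lemma vpos_nth [simp]: "vpos v $ i = max (v $ i) 0"
  by (simp add: vpos_def)

lemma vneg_nth [simp]: "vneg v $ i = max (- (v $ i)) 0"
  by (simp add: vneg_def)

lemma inner_ones: "x \<bullet> ones = (\<Sum>i\<in>UNIV. x $ i)"
  by (simp add: inner_vec_def)

lemma ones_inner: "ones \<bullet> x = (\<Sum>i\<in>UNIV. x $ i)"
  by (simp add: inner_vec_def)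

lemma vpos_minus_vneg: "vpos v - vneg v = v"
  by (simp add: vec_eq_iff max_def)

lemma vneg_minus_vpos: "vneg v - vpos v = - v"
  by (simp add: vec_eq_iff max_def)

lemma inner_vpos_vneg: "vpos v \<bullet> vneg v = 0"
  unfolding inner_vec_def by (intro sum.neutral) (auto simp: max_def)

lemma inner_vneg_ones_nonneg: "0 \<le> vneg v \<bullet> ones"
  unfolding inner_ones by (intro sum_nonneg) simp

lemma vneg_scaleR: "0 < k \<Longrightarrow> vneg (k *\<^sub>R v) = k *\<^sub>R vneg v"
  by (auto simp: vec_eq_iff max_def mult_le_0_iff zero_le_mult_iff)

lemma mem_coneL_iff: "(x, u) \<in> coneL \<longleftrightarrow> (\<forall>i. norm u \<le> x $ i)"
  by (simp add: coneL_def less_eq_vec_def)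

lemma mem_coneM_iff: "(x, u) \<in> coneM \<longleftrightarrow> norm u \<le> x \<bullet> ones \<and> (\<forall>i. 0 \<le> x $ i)"
  by (simp add: coneM_def less_eq_vec_def)

lemma closed_coneL: "closed (coneL :: ((real^'p) \<times> (real^'q)) set)"
proof -
  have eq: "coneL = {p::(real^'p) \<times> (real^'q). \<forall>i. norm (snd p) \<le> fst p $ i}"
    by (auto simp: mem_coneL_iff)
  show ?thesis
    unfolding eq by (intro closed_Collect_all closed_Collect_le continuous_intros)
qed

lemma closed_coneM: "closed (coneM :: ((real^'p) \<times> (real^'q)) set)"
proof -
  have eq: "coneM = {p::(real^'p) \<times> (real^'q). norm (snd p) \<le> fst p \<bullet> ones}
      \<inter> {p. \<forall>i. 0 \<le> fst p $ i}"
    by (auto simp: mem_coneM_iff)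
  show ?thesis
    unfolding eq by (intro closed_Int closed_Collect_all closed_Collect_le continuous_intros)
qed

lemma convex_coneL: "convex coneL"
proof (rule convexI, clarify)
  fix x y :: "real^'p" and u v :: "real^'q" and a b :: real
  assume xu: "(x, u) \<in> coneL" and yv: "(y, v) \<in> coneL" and ab: "0 \<le> a" "0 \<le> b"
  have "norm (a *\<^sub>R u + b *\<^sub>R v) \<le> a * x $ i + b * y $ i" for i
  proof -
    have "norm (a *\<^sub>R u + b *\<^sub>R v) \<le> a * norm u + b * norm v"
      using norm_triangle_ineq[of "a *\<^sub>R u" "b *\<^sub>R v"] ab by simp
    also have "\<dots> \<le> a * x $ i + b * y $ i"
      using xu yv ab by (intro add_mono mult_left_mono) (auto simp: mem_coneL_iff)
    finally show ?thesis .
  qed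
  then show "a *\<^sub>R (x, u) + b *\<^sub>R (y, v) \<in> coneL"
    by (simp add: mem_coneL_iff)
qed

lemma convex_coneM: "convex coneM"
proof (rule convexI, clarify)
  fix x y :: "real^'p" and u v :: "real^'q" and a b :: real
  assume xu: "(x, u) \<in> coneM" and yv: "(y, v) \<in> coneM" and ab: "0 \<le> a" "0 \<le> b"
  have "norm (a *\<^sub>R u + b *\<^sub>R v) \<le> a * norm u + b * norm v"
    using norm_triangle_ineq[of "a *\<^sub>R u" "b *\<^sub>R v"] ab by simp
  also have "\<dots> \<le> a * (x \<bullet> ones) + b * (y \<bullet> ones)"
    using xu yv ab by (intro add_mono mult_left_mono) (auto simp: mem_coneM_iff)
  finally show "a *\<^sub>R (x, u) + b *\<^sub>R (y, v) \<in> coneM"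
    using xu yv ab by (auto simp: mem_coneM_iff inner_add_left)
qed

lemma inner_coneL_coneM_nonneg:
  assumes "a \<in> coneL" "b \<in> coneM"
  shows "0 \<le> a \<bullet> b"
proof -
  obtain x u y v where a: "a = (x, u)" and b: "b = (y, v)"
    by fastforce
  have "norm u * (y \<bullet> ones) = (\<Sum>i\<in>UNIV. norm u * y $ i)"
    by (simp add: inner_ones sum_distrib_left)
  also have "\<dots> \<le> (\<Sum>i\<in>UNIV. x $ i * y $ i)"
    using assms by (intro sum_mono mult_right_mono) (auto simp: a b mem_coneL_iff mem_coneM_iff)
  also have "\<dots> = x \<bullet> y"
    by (simp add: inner_vec_def)
  finally have "norm u * (y \<bullet> ones) \<le> x \<bullet> y" .
  moreover have "norm u * norm v \<le> norm u * (y \<bullet> ones)"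
    using assms by (intro mult_left_mono) (auto simp: b mem_coneM_iff)
  moreover have "- (u \<bullet> v) \<le> norm u * norm v"
    using Cauchy_Schwarz_ineq2[of u v] by simp
  ultimately show ?thesis
    by (simp add: a b)
qed

lemma closest_point_eqI:
  fixes x y :: "'a::euclidean_space"
  assumes "convex S" "closed S" "y \<in> S" "\<And>s. s \<in> S \<Longrightarrow> (x - y) \<bullet> (s - y) \<le> 0"
  shows "closest_point S x = y"
proof -
  have "dist x y \<le> dist x s" if "s \<in> S" for s
  proof -
    have "norm (x - s)^2 = norm (x - y)^2 - 2 * ((x - y) \<bullet> (s - y)) + norm (s - y)^2"
      using power2_norm_eq_inner[of "(x - y) - (s - y)"] by (simp add: power2_norm_eq_inner inner_diff_left inner_diff_right inner_commute)
    then have "norm (x - y)^2 \<le> norm (x - s)^2"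
      using assms(4)[OF that] by (smt (verit) zero_le_power2)
    then show ?thesis
      by (simp add: dist_norm power2_le_iff_abs_le)
  qed
  then show ?thesis
    using closest_point_unique[OF assms(1-3)] by auto
qed

lemma closest_point_orthogonal_split:
  fixes a b :: "'a::euclidean_space"
  assumes "convex S" "closed S" "convex T" "closed T"
    and nonneg: "\<And>s t. s \<in> S \<Longrightarrow> t \<in> T \<Longrightarrow> 0 \<le> s \<bullet> t"
    and "a \<in> S" "b \<in> T" "a \<bullet> b = 0" "x = a - b"
  shows "closest_point S x = a \<and> closest_point T (- x) = b"
proof
  show "closest_point S x = a"
  proof (rule closest_point_eqI[OF assms(1,2,6)])
    fix s assume "s \<in> S"
    then show "(x - a) \<bullet> (s - a) \<le> 0"
      using nonneg[of s b] assms(7-9) by (simp add: inner_diff_right inner_commute)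
  qed
  show "closest_point T (- x) = b"
  proof (rule closest_point_eqI[OF assms(3,4,7)])
    fix t assume "t \<in> T"
    then show "(- x - b) \<bullet> (t - b) \<le> 0"
      using nonneg[of a t] assms(6,8,9) by (simp add: inner_diff_right)
  qed
qed

lemma closest_point_coneL_coneM:
  assumes "(x, u) \<in> coneL" "(y, v) \<in> coneM" "x \<bullet> y + u \<bullet> v = 0" "z = x - y" "w = u - v"
  shows "closest_point coneL (z, w) = (x, u) \<and> closest_point coneM (- z, - w) = (y, v)"
  using closest_point_orthogonal_split[OF convex_coneL closed_coneL convex_coneM closed_coneM
      inner_coneL_coneM_nonneg assms(1,2), of "(z, w)"] assms(3-5)
  by simp

lemma closest_point_cones_if_vpos_ge:
  assumes "norm w *\<^sub>R ones \<le> vpos z"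
  shows "closest_point coneL (z, w) = (vpos z, w) \<and> closest_point coneM (-z, -w) = (vneg z, 0)"
  using closest_point_coneL_coneM[of "vpos z" w "vneg z" 0] assms
  by (simp add: mem_coneL_iff mem_coneM_iff less_eq_vec_def vpos_minus_vneg vneg_minus_vpos
      inner_vpos_vneg inner_vneg_ones_nonneg)

lemma closest_point_cones_if_vneg_ge:
  assumes "norm w \<le> vneg z \<bullet> ones"
  shows "closest_point coneL (z, w) = (vpos z, 0) \<and> closest_point coneM (-z, -w) = (vneg z, -w)"
  using closest_point_coneL_coneM[of "vpos z" 0 "vneg z" "-w"] assms
  by (simp add: mem_coneL_iff mem_coneM_iff vpos_minus_vneg vneg_minus_vpos inner_vpos_vneg)

lemma closest_point_cones_shifted:
  fixes z :: "real^'p" and w :: "real^'q" and t :: real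
  defines "v \<equiv> z - (t * norm w) *\<^sub>R ones"
  assumes "0 \<le> t" "t \<le> 1" and root: "ones \<bullet> vneg v = (1 - t) * norm w"
  shows "closest_point coneL (z, w) = (vpos v + (t * norm w) *\<^sub>R ones, t *\<^sub>R w)
    \<and> closest_point coneM (-z, -w) = (vneg v, - ((1 - t) *\<^sub>R w))"
proof -
  let ?x = "vpos v + (t * norm w) *\<^sub>R ones"
  have "(?x, t *\<^sub>R w) \<in> coneL"
    using assms(2) by (auto simp: mem_coneL_iff)
  moreover have "(vneg v, - ((1 - t) *\<^sub>R w)) \<in> coneM"
    using assms(3) root by (auto simp: mem_coneM_iff inner_commute)
  moreover have "?x \<bullet> vneg v + (t *\<^sub>R w) \<bullet> - ((1 - t) *\<^sub>R w) = 0"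
  proof -
    have "?x \<bullet> vneg v = t * norm w * ((1 - t) * norm w)"
      using root by (simp add: inner_add_left inner_vpos_vneg)
    moreover have "(t *\<^sub>R w) \<bullet> - ((1 - t) *\<^sub>R w) = - (t * (1 - t) * (w \<bullet> w))"
      by simp
    ultimately show ?thesis
      by (simp only: dot_square_norm) (simp add: power2_eq_square)
  qed
  moreover have "z = ?x - vneg v" "w = t *\<^sub>R w - - ((1 - t) *\<^sub>R w)"
    using vpos_minus_vneg[of v] by (simp_all add: v_def algebra_simps)
  ultimately show ?thesis
    using closest_point_coneL_coneM[of ?x "t *\<^sub>R w" "vneg v" "- ((1 - t) *\<^sub>R w)"]
    by blast
qed

lemma root_equation_iff:
  fixes z :: "real^'p"
  assumes "0 < lam"
  shows "lam * c = ones \<bullet> vneg ((lam + 1) *\<^sub>R z - c *\<^sub>R ones)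
    \<longleftrightarrow> ones \<bullet> vneg (z - (c / (lam + 1)) *\<^sub>R ones) = lam / (lam + 1) * c"
proof -
  have "(lam + 1) *\<^sub>R z - c *\<^sub>R ones = (lam + 1) *\<^sub>R (z - (c / (lam + 1)) *\<^sub>R ones)"
    using assms by (simp add: scaleR_right_diff_distrib)
  then have "ones \<bullet> vneg ((lam + 1) *\<^sub>R z - c *\<^sub>R ones)
      = (lam + 1) * (ones \<bullet> vneg (z - (c / (lam + 1)) *\<^sub>R ones))"
    using assms by (simp add: vneg_scaleR)
  then show ?thesis
    using assms by (auto simp: field_simps)
qed

lemma strict_mono_shifted_vneg:
  fixes z :: "real^'p"
  assumes "0 < c"
  shows "strict_mono (\<lambda>t. ones \<bullet> vneg (z - (t * c) *\<^sub>R ones) + t * c)"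
proof (rule strict_monoI)
  fix s t :: real
  assume "s < t"
  then have "s * c < t * c"
    using assms by simp
  moreover from this have
    "ones \<bullet> vneg (z - (s * c) *\<^sub>R ones) \<le> ones \<bullet> vneg (z - (t * c) *\<^sub>R ones)"
    unfolding ones_inner by (intro sum_mono) auto
  ultimately show "ones \<bullet> vneg (z - (s * c) *\<^sub>R ones) + s * c
      < ones \<bullet> vneg (z - (t * c) *\<^sub>R ones) + t * c"
    by simp
qed

lemma ex1_shifted_root:
  fixes z :: "real^'p"
  assumes "\<not> c *\<^sub>R ones \<le> vpos z" "ones \<bullet> vneg z < c"
  shows "\<exists>!t. 0 < t \<and> t < 1 \<and> ones \<bullet> vneg (z - (t * c) *\<^sub>R ones) = (1 - t) * c"
proof -
  define g where "g t = ones \<bullet> vneg (z - (t * c) *\<^sub>R ones) + t * c" for t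
  obtain i where i: "max (z $ i) 0 < c"
    using assms(1) by (auto simp: less_eq_vec_def not_le)
  then have "0 < c"
    by linarith
  then have mono: "strict_mono g"
    unfolding g_def by (rule strict_mono_shifted_vneg)
  have "g 0 < c"
    using assms(2) by (simp add: g_def)
  have "0 < vneg (z - c *\<^sub>R ones) $ i"
    using i by simp
  also have "\<dots> \<le> ones \<bullet> vneg (z - c *\<^sub>R ones)"
    unfolding ones_inner by (rule member_le_sum) auto
  finally have "c < g 1"
    by (simp add: g_def)
  moreover have "continuous_on {0..1} g"
    unfolding g_def ones_inner vneg_nth by (intro continuous_intros)
  ultimately obtain t where t: "0 \<le> t" "t \<le> 1" "g t = c"
    using IVT'[of g 0 c 1] \<open>g 0 < c\<close> by auto
  with \<open>g 0 < c\<close> \<open>c < g 1\<close> have "0 < t" "t < 1"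
    by (auto simp: order_le_less)
  moreover have "g s = c \<longleftrightarrow> s = t" for s
    using t(3) strict_mono_eq[OF mono, of s t] by simp
  ultimately show ?thesis
    by (auto simp: g_def algebra_simps)
qed

lemma ex1_root_equation:
  fixes z :: "real^'p" and w :: "real^'q"
  assumes "\<not> norm w *\<^sub>R ones \<le> vpos z" "vneg z \<bullet> ones < norm w"
  shows "\<exists>!lam. 0 < lam \<and> lam * norm w = ones \<bullet> vneg ((lam + 1) *\<^sub>R z - norm w *\<^sub>R ones)"
proof -
  have "\<exists>!t. 0 < t \<and> t < 1 \<and> ones \<bullet> vneg (z - (t * norm w) *\<^sub>R ones) = (1 - t) * norm w"
    using ex1_shifted_root[of "norm w" z] assms by (simp add: inner_commute)
  then obtain t where t: "0 < t" "t < 1"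
    and root_t: "ones \<bullet> vneg (z - (t * norm w) *\<^sub>R ones) = (1 - t) * norm w"
    and unique: "\<And>s. 0 < s \<and> s < 1 \<and> ones \<bullet> vneg (z - (s * norm w) *\<^sub>R ones) = (1 - s) * norm w
      \<Longrightarrow> s = t"
    by blast
  have solution_iff:
    "lam * norm w = ones \<bullet> vneg ((lam + 1) *\<^sub>R z - norm w *\<^sub>R ones) \<longleftrightarrow> 1 / (lam + 1) = t"
    if "0 < lam" for lam
  proof -
    have "lam / (lam + 1) = 1 - 1 / (lam + 1)" "norm w / (lam + 1) = 1 / (lam + 1) * norm w"
      using that by (simp_all add: field_simps)
    moreover have "0 < 1 / (lam + 1)" "1 / (lam + 1) < 1"
      using that by simp_all
    ultimately show ?thesis
      using root_equation_iff[OF that] unique[of "1 / (lam + 1)"] root_t by auto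
  qed
  moreover have "0 < lam \<and> 1 / (lam + 1) = t \<longleftrightarrow> lam = 1 / t - 1" for lam
  proof
    assume "lam = 1 / t - 1"
    with t show "0 < lam \<and> 1 / (lam + 1) = t"
      by simp
  qed (use t in \<open>auto simp: field_simps\<close>)
  ultimately have "0 < lam \<and> lam * norm w = ones \<bullet> vneg ((lam + 1) *\<^sub>R z - norm w *\<^sub>R ones)
      \<longleftrightarrow> lam = 1 / t - 1" for lam
    by blast
  then show ?thesis
    by simp
qed

lemma closest_point_cones_root:
  fixes z :: "real^'p" and w :: "real^'q"
  assumes "0 < lam" and root: "lam * norm w = ones \<bullet> vneg ((lam + 1) *\<^sub>R z - norm w *\<^sub>R ones)"
  shows "closest_point coneL (z, w) =
      (vpos (z - (1 / (lam + 1)) *\<^sub>R (norm w *\<^sub>R ones)) + (1 / (lam + 1)) *\<^sub>R (norm w *\<^sub>R ones),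
       (1 / (lam + 1)) *\<^sub>R w)
    \<and> closest_point coneM (-z, -w) =
      (vneg (z - (1 / (lam + 1)) *\<^sub>R (norm w *\<^sub>R ones)), - (lam / (lam + 1)) *\<^sub>R w)"
proof -
  define t where "t = 1 / (lam + 1)"
  have "0 \<le> t" "t \<le> 1"
    using assms(1) by (simp_all add: t_def)
  moreover have "norm w / (lam + 1) = t * norm w" "lam / (lam + 1) = 1 - t"
    using assms(1) by (simp_all add: t_def field_simps)
  then have "ones \<bullet> vneg (z - (t * norm w) *\<^sub>R ones) = (1 - t) * norm w"
    using root_equation_iff[OF assms(1), where c = "norm w" and z = z] root by simp
  ultimately show ?thesis
    using closest_point_cones_shifted[of t z w] \<open>lam / (lam + 1) = 1 - t\<close>
    unfolding t_def[symmetric] by (simp flip: scaleR_minus_left)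
qed

theorem theorem2:
  fixes z :: "real^'p" and w :: "real^'q"
  shows
    "(vpos z \<ge> norm w *\<^sub>R ones \<longrightarrow>
        closest_point coneL (z, w) = (vpos z, w) \<and>
        closest_point coneM (-z, -w) = (vneg z, 0))
   \<and> (vneg z \<bullet> ones \<ge> norm w \<longrightarrow>
        closest_point coneL (z, w) = (vpos z, 0) \<and>
        closest_point coneM (-z, -w) = (vneg z, -w))
   \<and> (\<not> (vpos z \<ge> norm w *\<^sub>R ones) \<and> vneg z \<bullet> ones < norm w \<longrightarrow>
        (\<exists>!lam::real. lam > 0 \<and>
            lam * norm w = ones \<bullet> vneg ((lam + 1) *\<^sub>R z - norm w *\<^sub>R ones))
      \<and> (\<forall>lam::real. lam > 0 \<and>
            lam * norm w = ones \<bullet> vneg ((lam + 1) *\<^sub>R z - norm w *\<^sub>R ones) \<longrightarrow>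
          closest_point coneL (z, w) =
            (vpos (z - (1 / (lam + 1)) *\<^sub>R (norm w *\<^sub>R ones))
               + (1 / (lam + 1)) *\<^sub>R (norm w *\<^sub>R ones),
             (1 / (lam + 1)) *\<^sub>R w) \<and>
          closest_point coneM (-z, -w) =
            (vneg (z - (1 / (lam + 1)) *\<^sub>R (norm w *\<^sub>R ones)),
             - (lam / (lam + 1)) *\<^sub>R w)))"
  using closest_point_cones_if_vpos_ge[of w z] closest_point_cones_if_vneg_ge[of w z]
    ex1_root_equation[of w z] closest_point_cones_root[of _ w z]
  by blast

end
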